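(* For every $n\ge0$ and $r\in\mathcal{Y}_n$, in the Hopf algebra $\mathcal{Y}Sym$, $$\Delta(M_r)=\sum_{r=s\backslash t}M_s\otimes M_t,$$ the sum over all pairs of trees $(s,t)$ (with $s\in\mathcal{Y}_j$, $t\in\mathcal{Y}_{n-j}$ for some $0\le j\le n$) such that $r=s\backslash t$.
   Context: $\mathcal{Y}_n$ is the set of rooted planar binary trees with $n$ internal nodes ($n+1$ leaves); $\mathcal{Y}_0=\{|\}$. For $s\in\mathcal{Y}_p,t\in\mathcal{Y}_q$, $s\vee t\in\mathcal{Y}_{p+q+1}$ has a root with left subtree $s$ and right subtree $t$; each $t\in\mathcal{Y}_n$, $n\ge1$, is uniquely $t_l\vee t_r$. The Tamari order on $\mathcal{Y}_n$ is generated by replacing a subtree $(a\vee b)\vee c$ by the larger $a\vee(b\vee c)$. $s\backslash t$ is defined by $|\backslash t=t$, $s\backslash t=s_l\vee(s_r\backslash t)$ (graft the root of $t$ onto the rightmost leaf of $s$). $\mathcal{Y}Sym$ (the graded dual of the Loday–Ronco Hopf algebra) is the graded Hopf algebra over $\mathbb{Q}$ with basis $\{F_t\}$, $t\in\bigsqcup_n\mathcal{Y}_n$, $F_t$ of degree $n$ for $t\in\mathcal{Y}_n$. Number the leaves of $t\in\mathcal{Y}_n$ by $0,\dots,n$ left to right. Splitting $t$ at leaf $i$ gives a pair $t\to(t_0,t_1)$ (the pieces left and right of the path from leaf $i$ to the root), defined recursively: $|$ splits at its unique leaf as $(|,|)$; if $t=t_l\vee t_r$ and leaf $i$ lies in $t_l$,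 where $t_l$ splits there as $(a,b)$, then $t\to(a,b\vee t_r)$; if leaf $i$ lies in $t_r$, where $t_r$ splits there as $(c,d)$, then $t\to(t_l\vee c,d)$. The coproduct is $\Delta(F_t)=\sum_{i=0}^n F_{t_0}\otimes F_{t_1}$ over these splittings. (The product, not needed here, is described by grafting pieces of divisions of $t$ onto leaves of $s$.) The monomial basis is $M_t:=\sum_{t\le s}\mu_{\mathcal{Y}_n}(t,s)F_s$, with $\mu_{\mathcal{Y}_n}$ the Möbius function of the Tamari order, equivalently $F_t=\sum_{s\ge t}M_s$. *)

theory Defs
  imports Complex_Main
begin

datatype ytree = Leaf | Node ytree ytree

text \<open>Number of internal nodes (the degree n of t in Y_n).\<close>
fun nodes :: "ytree \<Rightarrow> nat" where
  "nodes Leaf = 0"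
| "nodes (Node l r) = nodes l + nodes r + 1"

text \<open>Over-under product s \<setminus> t: graft the root of t onto the rightmost leaf of s.\<close>
fun graft :: "ytree \<Rightarrow> ytree \<Rightarrow> ytree" where
  "graft Leaf t = t"
| "graft (Node l r) t = Node l (graft r t)"

inductive tamari_step :: "ytree \<Rightarrow> ytree \<Rightarrow> bool" where
  rot: "tamari_step (Node (Node a b) c) (Node a (Node b c))"
| left: "tamari_step l l' \<Longrightarrow> tamari_step (Node l r) (Node l' r)"
| right: "tamari_step r r' \<Longrightarrow> tamari_step (Node l r) (Node l r')"

definition tamari_le :: "ytree \<Rightarrow> ytree \<Rightarrow> bool" where
  "tamari_le = tamari_step\<^sup>*\<^sup>*"

definition tamari_mobius :: "ytree \<Rightarrow> ytree \<Rightarrow> int" where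
  "tamari_mobius = (THE mu. \<forall>x y. mu x y =
     (if x = y then 1
      else if tamari_le x y then
        - (\<Sum>z\<in>{z. tamari_le x z \<and> tamari_le z y \<and> z \<noteq> y}. mu x z)
      else 0))"

text \<open>An element of YSym is represented by its coefficient function w.r.t. the
  basis (F_t); an element of YSym \<otimes> YSym by its coefficients w.r.t. (F_a \<otimes> F_b).\<close>
type_synonym ysym = "ytree \<Rightarrow> rat"
type_synonym ysym2 = "ytree \<times> ytree \<Rightarrow> rat"

definition F :: "ytree \<Rightarrow> ysym" where
  "F t = (\<lambda>s. if s = t then 1 else 0)"

definition tensor :: "ysym \<Rightarrow> ysym \<Rightarrow> ysym2" where
  "tensor f g = (\<lambda>(a, b). f a * g b)"

text \<open>Splitting t at leaf i (leaves numbered 0..nodes t from left to right).\<close>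
fun split_at :: "ytree \<Rightarrow> nat \<Rightarrow> ytree \<times> ytree" where
  "split_at Leaf i = (Leaf, Leaf)"
| "split_at (Node l r) i =
     (if i \<le> nodes l then (let (a, b) = split_at l i in (a, Node b r))
      else (let (c, d) = split_at r (i - nodes l - 1) in (Node l c, d)))"

text \<open>Coproduct, linear extension of Delta(F_t) = sum_{i=0}^{n} F_{t_0} \<otimes> F_{t_1}.
  The coefficient of F_a \<otimes> F_b in Delta(F_t) is the number of leaves i with
  split_at t i = (a,b); only trees t with nodes t = nodes a + nodes b contribute.\<close>
definition coprod :: "ysym \<Rightarrow> ysym2" where
  "coprod f = (\<lambda>(a, b). \<Sum>t\<in>{t. nodes t = nodes a + nodes b}.
       f t * of_nat (card {i. i \<le> nodes t \<and> split_at t i = (a, b)}))"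

definition M :: "ytree \<Rightarrow> ysym" where
  "M t = (\<lambda>s. if tamari_le t s then of_int (tamari_mobius t s) else 0)"

end

theory Submission
  imports Defs
begin

text \<open>Splitting a tree is adjoint to grafting: if \<open>t\<close> splits at leaf \<open>nodes s\<close> into
  \<open>(t\<^sub>0, t\<^sub>1)\<close>, then \<open>t \<le> s \<setminus> u\<close> in the Tamari order iff \<open>t\<^sub>0 \<le> s\<close> and \<open>t\<^sub>1 \<le> u\<close>.
  Expanding \<open>F\<^sub>t\<^sub>0 \<otimes> F\<^sub>t\<^sub>1 = \<Sum>\<^bsub>s \<ge> t\<^sub>0, u \<ge> t\<^sub>1\<^esub> M\<^sub>s \<otimes> M\<^sub>u\<close>, this says that
  \<open>\<Delta>(F\<^sub>t) = \<Sum>\<^bsub>r \<ge> t\<^esub> \<Sum>\<^bsub>s \<setminus> u = r\<^esub> M\<^sub>s \<otimes> M\<^sub>u\<close>, and Moebius inversion over the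
  (finite) up-set of \<open>r\<close> turns this into the formula for \<open>\<Delta>(M\<^sub>r)\<close>.\<close>

section \<open>Moebius functions of locally finite orders\<close>

locale locally_finite_order =
  fixes le :: "'a \<Rightarrow> 'a \<Rightarrow> bool" (infix "\<preceq>" 50)
  assumes le_refl: "x \<preceq> x"
    and le_trans: "x \<preceq> y \<Longrightarrow> y \<preceq> z \<Longrightarrow> x \<preceq> z"
    and le_antisym: "x \<preceq> y \<Longrightarrow> y \<preceq> x \<Longrightarrow> x = y"
    and finite_intervals: "finite {z. x \<preceq> z \<and> z \<preceq> y}"
begin

definition interval :: "'a \<Rightarrow> 'a \<Rightarrow> 'a set" where
  "interval x y = {z. x \<preceq> z \<and> z \<preceq> y}"

lemma finite_interval: "finite (interval x y)"
  unfolding interval_def by (rule finite_intervals)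

lemma card_interval_less:
  assumes "x \<preceq> z" "z \<preceq> y" "z \<noteq> y"
  shows "card (interval x z) < card (interval x y)"
proof (rule psubset_card_mono[OF finite_interval])
  have "y \<in> interval x y - interval x z"
    using assms by (auto simp: interval_def intro: le_refl le_trans dest: le_antisym)
  then show "interval x z \<subset> interval x y"
    using assms by (auto simp: interval_def intro: le_trans)
qed

function mobius :: "'a \<Rightarrow> 'a \<Rightarrow> int" where
  "mobius x y = (if x = y then 1 else if x \<preceq> y then
     - (\<Sum>z\<in>{z. x \<preceq> z \<and> z \<preceq> y \<and> z \<noteq> y}. mobius x z) else 0)"
  by auto
termination
  by (relation "measure (\<lambda>(x, y). card (interval x y))") (auto intro: card_interval_less)

declare mobius.simps [simp del]

lemma mobius_unique:
  assumes f: "\<And>x y. f x y = (if x = y then 1 else if x \<preceq> y then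
     - (\<Sum>z\<in>{z. x \<preceq> z \<and> z \<preceq> y \<and> z \<noteq> y}. f x z) else 0)"
  shows "f = mobius"
proof (intro ext)
  fix x y
  show "f x y = mobius x y"
  proof (induction "card (interval x y)" arbitrary: y rule: less_induct)
    case less
    have "(\<Sum>z\<in>{z. x \<preceq> z \<and> z \<preceq> y \<and> z \<noteq> y}. f x z) =
        (\<Sum>z\<in>{z. x \<preceq> z \<and> z \<preceq> y \<and> z \<noteq> y}. mobius x z)"
      by (rule sum.cong) (auto intro: less card_interval_less)
    then show ?case
      by (subst f, subst mobius.simps) simp
  qed
qed

lemma sum_mobius_left: "(\<Sum>z\<in>interval x y. mobius x z) = (if x = y then 1 else 0)"
proof -
  consider "x = y" | "x \<noteq> y" "x \<preceq> y" | "\<not> x \<preceq> y" by blast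
  then show ?thesis
  proof cases
    case 1
    then have "interval x y = {x}" by (auto simp: interval_def le_refl dest: le_antisym)
    with 1 show ?thesis by (simp add: mobius.simps)
  next
    case 2
    have "interval x y = insert y {z. x \<preceq> z \<and> z \<preceq> y \<and> z \<noteq> y}"
      using 2 by (auto simp: interval_def le_refl)
    moreover have "finite {z. x \<preceq> z \<and> z \<preceq> y \<and> z \<noteq> y}"
      by (rule finite_subset[OF _ finite_interval[of x y]]) (auto simp: interval_def)
    ultimately show ?thesis
      using 2 by (simp add: mobius.simps[of x y])
  next
    case 3
    then have "interval x y = {}" by (auto simp: interval_def intro: le_trans)
    with 3 show ?thesis using le_refl by auto
  qed
qed

lemma sum_interval_swap:
  "(\<Sum>w\<in>interval x y. \<Sum>z\<in>interval w y. f w z) = (\<Sum>z\<in>interval x y. \<Sum>w\<in>interval x z. f w z)"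
proof -
  have "(\<Sum>w\<in>interval x y. \<Sum>z\<in>interval w y. f w z) =
      (\<Sum>w\<in>interval x y. \<Sum>z\<in>{z \<in> interval x y. w \<preceq> z}. f w z)"
    by (intro sum.cong refl) (auto simp: interval_def intro: le_trans)
  also have "\<dots> = (\<Sum>z\<in>interval x y. \<Sum>w\<in>{w \<in> interval x y. w \<preceq> z}. f w z)"
    by (rule sum.swap_restrict[OF finite_interval finite_interval])
  also have "\<dots> = (\<Sum>z\<in>interval x y. \<Sum>w\<in>interval x z. f w z)"
    by (intro sum.cong refl) (auto simp: interval_def intro: le_trans)
  finally show ?thesis .
qed

lemma mobius_not_le: "\<not> x \<preceq> y \<Longrightarrow> mobius x y = 0"
  by (simp add: mobius.simps[of x y] le_refl) (metis le_refl)

lemma locally_finite_order_dual: "locally_finite_order (\<lambda>x y. y \<preceq> x)"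
  by unfold_locales (auto intro: le_refl le_trans le_antisym simp: conj_commute finite_intervals)

text \<open>Left and right inverses of the zeta function in the incidence algebra agree.\<close>

lemma mobius_eq_dual: "mobius x y = locally_finite_order.mobius (\<lambda>x y. y \<preceq> x) y x"
proof -
  interpret dual: locally_finite_order "\<lambda>x y. y \<preceq> x"
    by (rule locally_finite_order_dual)
  define nu where "nu x y = dual.mobius y x" for x y
  have sum_nu: "(\<Sum>z\<in>interval x y. nu z y) = (if x = y then 1 else 0)" for x y
    using dual.sum_mobius_left[of y x]
    by (simp add: nu_def interval_def dual.interval_def conj_commute eq_commute)
  have "mobius x y = (\<Sum>w\<in>interval x y. if w = y then mobius x w else 0)"
    using finite_interval[of x y] by (simp add: interval_def le_refl mobius_not_le)
  also have "\<dots> = (\<Sum>w\<in>interval x y. mobius x w * (\<Sum>z\<in>interval w y. nu z y))"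
    by (intro sum.cong refl) (simp add: sum_nu)
  also have "\<dots> = (\<Sum>w\<in>interval x y. \<Sum>z\<in>interval w y. mobius x w * nu z y)"
    by (simp add: sum_distrib_left)
  also have "\<dots> = (\<Sum>z\<in>interval x y. \<Sum>w\<in>interval x z. mobius x w * nu z y)"
    by (rule sum_interval_swap)
  also have "\<dots> = (\<Sum>z\<in>interval x y. (\<Sum>w\<in>interval x z. mobius x w) * nu z y)"
    by (simp add: sum_distrib_right)
  also have "\<dots> = (\<Sum>z\<in>interval x y. if x = z then nu z y else 0)"
    by (intro sum.cong refl) (simp add: sum_mobius_left)
  also have "\<dots> = nu x y"
    using finite_interval[of x y] by (simp add: interval_def le_refl nu_def dual.mobius_not_le)
  finally show ?thesis
    by (simp add: nu_def)
qed

lemma sum_mobius_right: "(\<Sum>z\<in>interval x y. mobius z y) = (if x = y then 1 else 0)"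
proof -
  interpret dual: locally_finite_order "\<lambda>x y. y \<preceq> x"
    by (rule locally_finite_order_dual)
  show ?thesis
    using dual.sum_mobius_left[of y x]
    by (simp add: mobius_eq_dual interval_def dual.interval_def conj_commute eq_commute)
qed

lemma mobius_inversion:
  fixes h :: "'a \<Rightarrow> 'b::comm_ring_1"
  assumes "finite {y. x \<preceq> y}"
  shows "(\<Sum>t | x \<preceq> t. of_int (mobius x t) * (\<Sum>y | t \<preceq> y. h y)) = h x"
proof -
  let ?U = "{y. x \<preceq> y}"
  have "(\<Sum>t\<in>?U. of_int (mobius x t) * (\<Sum>y | t \<preceq> y. h y)) =
      (\<Sum>t\<in>?U. \<Sum>y\<in>{y \<in> ?U. t \<preceq> y}. of_int (mobius x t) * h y)"
  proof (intro sum.cong refl)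
    fix t assume "t \<in> ?U"
    then have "{y. t \<preceq> y} = {y \<in> ?U. t \<preceq> y}" by (auto intro: le_trans)
    then show "of_int (mobius x t) * (\<Sum>y | t \<preceq> y. h y) =
        (\<Sum>y\<in>{y \<in> ?U. t \<preceq> y}. of_int (mobius x t) * h y)"
      by (simp only: sum_distrib_left)
  qed
  also have "\<dots> = (\<Sum>y\<in>?U. \<Sum>t\<in>{t \<in> ?U. t \<preceq> y}. of_int (mobius x t) * h y)"
    by (rule sum.swap_restrict) (use assms in auto)
  also have "\<dots> = (\<Sum>y\<in>?U. of_int (\<Sum>t\<in>interval x y. mobius x t) * h y)"
    by (simp add: interval_def sum_distrib_right)
  also have "\<dots> = (\<Sum>y\<in>?U. if x = y then h y else 0)"
    by (intro sum.cong refl) (simp add: sum_mobius_left)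
  also have "\<dots> = h x"
    using assms by (simp add: le_refl)
  finally show ?thesis .
qed

end

section \<open>The Tamari order\<close>

lemma tamari_step_nodes: "tamari_step x y \<Longrightarrow> nodes x = nodes y"
  by (induction rule: tamari_step.induct) auto

lemma tamari_le_nodes: "tamari_le x y \<Longrightarrow> nodes x = nodes y"
  unfolding tamari_le_def
  by (induction rule: rtranclp_induct) (auto dest: tamari_step_nodes)

text \<open>A rotation \<open>(a \<or> b) \<or> c \<mapsto> a \<or> (b \<or> c)\<close> raises this weight by \<open>nodes c + 1\<close>.\<close>

fun right_weight :: "ytree \<Rightarrow> nat" where
  "right_weight Leaf = 0"
| "right_weight (Node l r) = right_weight l + right_weight r + nodes r"

lemma tamari_step_right_weight: "tamari_step x y \<Longrightarrow> right_weight x < right_weight y"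
  by (induction rule: tamari_step.induct) (auto dest: tamari_step_nodes)

lemma tamari_le_right_weight: "tamari_le x y \<Longrightarrow> right_weight x \<le> right_weight y"
  unfolding tamari_le_def
  by (induction rule: rtranclp_induct) (auto dest: tamari_step_right_weight)

lemma tamari_le_antisym:
  assumes "tamari_le x y" "tamari_le y x"
  shows "x = y"
  using assms(1) unfolding tamari_le_def
proof (cases rule: converse_rtranclpE)
  case (step z)
  then have "right_weight x < right_weight y"
    unfolding tamari_le_def[symmetric]
    by (meson tamari_step_right_weight tamari_le_right_weight order.strict_trans2)
  with tamari_le_right_weight[OF assms(2)] show ?thesis
    by simp
qed

lemma finite_nodes_le: "finite {t. nodes t \<le> n}"
proof (induction n)
  case 0
  have "{t. nodes t \<le> 0} = {Leaf}"
    by (auto elim: nodes.elims)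
  then show ?case by simp
next
  case (Suc n)
  have "{t. nodes t \<le> Suc n} \<subseteq>
      insert Leaf (case_prod Node ` ({t. nodes t \<le> n} \<times> {t. nodes t \<le> n}))"
  proof
    fix t assume "t \<in> {t. nodes t \<le> Suc n}"
    then show "t \<in> insert Leaf (case_prod Node ` ({t. nodes t \<le> n} \<times> {t. nodes t \<le> n}))"
      by (cases t) force+
  qed
  then show ?case
    using Suc by (auto intro: finite_subset)
qed

lemma finite_tamari_up: "finite {y. tamari_le x y}"
  by (rule finite_subset[OF _ finite_nodes_le[of "nodes x"]]) (auto dest: tamari_le_nodes)

interpretation tamari: locally_finite_order tamari_le
proof
  show "tamari_le x x" for x
    by (simp add: tamari_le_def)
  show "tamari_le x z" if "tamari_le x y" "tamari_le y z" for x y z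
    using that unfolding tamari_le_def by (rule rtranclp_trans)
  show "x = y" if "tamari_le x y" "tamari_le y x" for x y
    using that by (rule tamari_le_antisym)
  show "finite {z. tamari_le x z \<and> tamari_le z y}" for x y
    by (rule finite_subset[OF _ finite_tamari_up[of x]]) auto
qed

declare tamari.le_trans [trans]

lemma tamari_mobius_eq: "tamari_mobius = tamari.mobius"
  unfolding tamari_mobius_def
proof (rule the_equality)
  show "\<forall>x y. tamari.mobius x y = (if x = y then 1 else if tamari_le x y then
      - (\<Sum>z\<in>{z. tamari_le x z \<and> tamari_le z y \<and> z \<noteq> y}. tamari.mobius x z) else 0)"
    by (metis tamari.mobius.simps)
qed (metis tamari.mobius_unique)

lemma M_apply: "M t s = (if tamari_le t s then of_int (tamari.mobius t s) else 0)"
  by (simp add: M_def tamari_mobius_eq)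

lemma F_eq_sum_M: "F t x = (\<Sum>s | tamari_le t s. M s x)"
proof -
  have "(\<Sum>s | tamari_le t s. M s x) = (\<Sum>s\<in>tamari.interval t x. of_int (tamari.mobius s x))"
    by (rule sum.mono_neutral_cong_right[OF finite_tamari_up])
      (auto simp: tamari.interval_def M_apply)
  also have "\<dots> = of_int (\<Sum>s\<in>tamari.interval t x. tamari.mobius s x)"
    by simp
  also have "\<dots> = F t x"
    by (simp add: tamari.sum_mobius_right F_def)
  finally show ?thesis ..
qed

lemma tamari_le_Node:
  assumes "tamari_le l l'" "tamari_le r r'"
  shows "tamari_le (Node l r) (Node l' r')"
proof -
  have "tamari_le (Node l r) (Node l' r)"
    using assms(1) unfolding tamari_le_def
    by (induction rule: rtranclp_induct) (auto intro: tamari_step.left rtranclp.rtrancl_into_rtrancl)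
  also have "tamari_le (Node l' r) (Node l' r')"
    using assms(2) unfolding tamari_le_def
    by (induction rule: rtranclp_induct) (auto intro: tamari_step.right rtranclp.rtrancl_into_rtrancl)
  finally show ?thesis .
qed

lemma tamari_le_rotate: "tamari_le (Node (Node a b) c) (Node a (Node b c))"
  by (simp add: tamari_le_def r_into_rtranclp tamari_step.rot)

section \<open>Splitting versus grafting\<close>

lemma tamari_le_graft:
  assumes "tamari_le s s'" "tamari_le u u'"
  shows "tamari_le (graft s u) (graft s' u')"
proof -
  have step: "tamari_step (graft s u) (graft s' u)" if "tamari_step s s'" for s s'
    using that by (induction rule: tamari_step.induct) (auto intro: tamari_step.intros)
  have "tamari_le (graft s u) (graft s' u)"
    using assms(1) unfolding tamari_le_def
    by (induction rule: rtranclp_induct) (auto intro: rtranclp.rtrancl_into_rtrancl step)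
  also have "tamari_le (graft s' u) (graft s' u')"
    by (induction s') (simp_all add: assms(2) tamari_le_Node tamari.le_refl)
  finally show ?thesis .
qed

lemma nodes_graft [simp]: "nodes (graft s u) = nodes s + nodes u"
  by (induction s) auto

lemma split_at_0 [simp]: "split_at t 0 = (Leaf, t)"
  by (induction t) auto

lemma split_at_graft: "split_at (graft s u) (nodes s) = (s, u)"
  by (induction s) auto

lemma nodes_split_at:
  "split_at t i = (a, b) \<Longrightarrow> i \<le> nodes t \<Longrightarrow> nodes a = i \<and> nodes b = nodes t - i"
  by (induction t arbitrary: i a b) (auto split: if_splits prod.splits)

lemma tamari_le_graft_split_at: "split_at t i = (a, b) \<Longrightarrow> tamari_le t (graft a b)"
proof (induction t arbitrary: i a b)
  case Leaf
  then show ?case by (simp add: tamari.le_refl)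
next
  case (Node l r)
  show ?case
  proof (cases "i \<le> nodes l")
    case True
    then obtain b' where split_l: "split_at l i = (a, b')" and b: "b = Node b' r"
      using Node.prems by (auto split: prod.splits)
    have "tamari_le (Node l r) (Node (graft a b') r)"
      using Node.IH(1)[OF split_l] by (simp add: tamari_le_Node tamari.le_refl)
    also have "tamari_le (Node (graft a b') r) (graft a (Node b' r))"
      by (induction a) (auto intro: tamari.le_trans tamari_le_rotate tamari_le_Node tamari.le_refl)
    finally show ?thesis
      using b by simp
  next
    case False
    then obtain a' where split_r: "split_at r (i - nodes l - 1) = (a', b)" and a: "a = Node l a'"
      using Node.prems by (auto split: prod.splits)
    show ?thesis
      using Node.IH(2)[OF split_r] a by (simp add: tamari_le_Node tamari.le_refl)
  qed
qed

lemma tamari_step_split_at: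
  assumes "tamari_step t t'" "split_at t i = (a, b)" "split_at t' i = (a', b')"
  shows "tamari_le a a' \<and> tamari_le b b'"
  using assms
proof (induction arbitrary: i a b a' b' rule: tamari_step.induct)
  case (rot x y z)
  then show ?case
    by (auto split: if_splits prod.splits simp: tamari_le_rotate tamari.le_refl)
next
  case (left l l' r)
  have "tamari_le l l'" and "nodes l = nodes l'"
    using left.hyps by (auto simp: tamari_le_def dest: tamari_step_nodes)
  with left show ?case
    by (auto split: if_splits prod.splits intro: tamari_le_Node tamari.le_refl)
next
  case (right r r' l)
  have "tamari_le r r'"
    using right.hyps by (simp add: tamari_le_def)
  with right show ?case
    by (auto split: if_splits prod.splits intro: tamari_le_Node tamari.le_refl)
qed

lemma tamari_le_split_at:
  assumes "tamari_le t t'"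
  shows "tamari_le (fst (split_at t i)) (fst (split_at t' i)) \<and>
    tamari_le (snd (split_at t i)) (snd (split_at t' i))"
  using assms[unfolded tamari_le_def]
proof (induction rule: rtranclp_induct)
  case base
  then show ?case by (simp add: tamari.le_refl)
next
  case (step y z)
  then show ?case
    using tamari_step_split_at[OF step(2), of i]
    by (metis prod.collapse tamari.le_trans)
qed

lemma tamari_le_graft_iff:
  assumes "split_at t (nodes s) = (a, b)"
  shows "tamari_le t (graft s u) \<longleftrightarrow> tamari_le a s \<and> tamari_le b u"
proof
  assume "tamari_le t (graft s u)"
  then show "tamari_le a s \<and> tamari_le b u"
    using tamari_le_split_at[of t "graft s u" "nodes s"] assms by (simp add: split_at_graft)
next
  assume "tamari_le a s \<and> tamari_le b u"
  then have "tamari_le (graft a b) (graft s u)"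
    by (simp add: tamari_le_graft)
  with tamari_le_graft_split_at[OF assms] show "tamari_le t (graft s u)"
    by (rule tamari.le_trans)
qed

section \<open>The coproduct in the monomial basis\<close>

lemma card_split_at:
  "card {i. i \<le> nodes t \<and> split_at t i = (a, b)} =
    (if nodes a \<le> nodes t \<and> split_at t (nodes a) = (a, b) then 1 else 0)"
proof -
  have "{i. i \<le> nodes t \<and> split_at t i = (a, b)} =
      (if nodes a \<le> nodes t \<and> split_at t (nodes a) = (a, b) then {nodes a} else {})"
    by (auto dest: nodes_split_at)
  then show ?thesis by simp
qed

lemma coprod_apply:
  "coprod f (a, b) =
    (\<Sum>t | nodes t = nodes a + nodes b. f t * (if split_at t (nodes a) = (a, b) then 1 else 0))"
  unfolding coprod_def prod.case by (intro sum.cong refl) (simp only: card_split_at, simp)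

lemma sum_above_graft_tensor_M:
  "(\<Sum>r | tamari_le t r. \<Sum>(s, u)\<in>{(s, u). graft s u = r}. tensor (M s) (M u) (a, b)) =
    (if nodes t = nodes a + nodes b \<and> split_at t (nodes a) = (a, b) then 1 else 0)"
proof -
  obtain t0 t1 where split: "split_at t (nodes a) = (t0, t1)"
    by fastforce
  let ?S = "{(s, u). tamari_le t (graft s u)}"
  let ?N = "{(s, u). nodes s = nodes a \<and> nodes u = nodes b}"
  have "?S \<subseteq> {s. nodes s \<le> nodes t} \<times> {u. nodes u \<le> nodes t}"
    by (auto dest: tamari_le_nodes)
  then have finite_S: "finite ?S"
    by (rule finite_subset) (simp add: finite_nodes_le)
  have graft_iff: "tamari_le t (graft s u) \<longleftrightarrow> tamari_le t0 s \<and> tamari_le t1 u"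
    if "nodes s = nodes a" for s u
    using tamari_le_graft_iff[of t s t0 t1 u] split that by simp
  have restricted: "?S \<inter> ?N =
      (if nodes t = nodes a + nodes b then {s. tamari_le t0 s} \<times> {u. tamari_le t1 u} else {})"
    using nodes_split_at[OF split]
    by (auto simp: graft_iff dest: tamari_le_nodes) (metis graft_iff tamari_le_nodes)
  have "(\<Sum>r | tamari_le t r. \<Sum>(s, u)\<in>{(s, u). graft s u = r}. tensor (M s) (M u) (a, b)) =
      (\<Sum>r | tamari_le t r. \<Sum>(s, u)\<in>{x \<in> ?S. case_prod graft x = r}. M s a * M u b)"
    by (intro sum.cong) (auto simp: tensor_def)
  also have "\<dots> = (\<Sum>(s, u)\<in>?S. M s a * M u b)"
    by (rule sum.group[OF finite_S finite_tamari_up]) auto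
  also have "\<dots> = (\<Sum>(s, u)\<in>?S \<inter> ?N. M s a * M u b)"
    by (rule sum.mono_neutral_right[OF finite_S]) (auto simp: M_apply split: if_splits dest: tamari_le_nodes)
  also have "\<dots> = (if nodes t = nodes a + nodes b
      then (\<Sum>s | tamari_le t0 s. M s a) * (\<Sum>u | tamari_le t1 u. M u b) else 0)"
    unfolding restricted by (simp add: sum_product sum.cartesian_product)
  also have "\<dots> = (if nodes t = nodes a + nodes b \<and> split_at t (nodes a) = (a, b) then 1 else 0)"
    by (simp add: F_eq_sum_M[symmetric] F_def split)
  finally show ?thesis .
qed

theorem theorem5p1:
  fixes r :: ytree
  shows "coprod (M r) =
    (\<lambda>p. \<Sum>(s, t)\<in>{(s, t). graft s t = r}. tensor (M s) (M t) p)"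
proof
  fix p :: "ytree \<times> ytree"
  obtain a b where p: "p = (a, b)"
    by fastforce
  define R where "R r' = (\<Sum>(s, u)\<in>{(s, u). graft s u = r'}. tensor (M s) (M u) (a, b))" for r'
  have "coprod (M r) (a, b) =
      (\<Sum>t | nodes t = nodes a + nodes b. M r t * (if split_at t (nodes a) = (a, b) then 1 else 0))"
    by (rule coprod_apply)
  also have "\<dots> = (\<Sum>t | tamari_le r t. of_int (tamari.mobius r t) *
      (if nodes t = nodes a + nodes b \<and> split_at t (nodes a) = (a, b) then 1 else 0))"
    by (rule sum.mono_neutral_cong[OF finite_tamari_up finite_subset[OF _ finite_nodes_le]])
      (auto simp: M_apply)
  also have "\<dots> = (\<Sum>t | tamari_le r t. of_int (tamari.mobius r t) * (\<Sum>r' | tamari_le t r'. R r'))"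
    by (simp add: R_def sum_above_graft_tensor_M)
  also have "\<dots> = R r"
    by (rule tamari.mobius_inversion[OF finite_tamari_up])
  finally show "coprod (M r) p = (\<Sum>(s, t)\<in>{(s, t). graft s t = r}. tensor (M s) (M t) p)"
    by (simp add: p R_def)
qed

end
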